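(* Let $\mathbf{P}$ be a finite poset with a metric $d_{\mathbf{P}}$. Then $d_{\mathrm{GT}}:\mathrm{Ob}(\mathrm{vect}^{\mathbf{P}})\times\mathrm{Ob}(\mathrm{vect}^{\mathbf{P}})\to[0,+\infty]$ is an extended pseudometric, i.e. for all $\mathbf{P}$-modules $M,N,O$: $d_{\mathrm{GT}}(M,M)=0$, $d_{\mathrm{GT}}(M,N)=d_{\mathrm{GT}}(N,M)$, and $d_{\mathrm{GT}}(M,O)\le d_{\mathrm{GT}}(M,N)+d_{\mathrm{GT}}(N,O)$.
   Context: Fix a field $k$; $\mathrm{vect}$ is the category of finite-dimensional $k$-vector spaces. A finite poset is a category with a unique morphism $x\to y$ iff $x\le y$; a $\mathbf{P}$-module is a functor $\mathbf{P}\to\mathrm{vect}$, and $\mathrm{vect}^{\mathbf{P}}$ is their category. For a monotone map $g$, $g^*$ denotes precomposition with $g$. A Galois insertion $f:\mathbf{Q}\rightleftarrows\mathbf{P}:g$ consists of monotone maps $f:\mathbf{Q}\to\mathbf{P}$, $g:\mathbf{P}\to\mathbf{Q}$ with $f(u)\le x\iff u\le g(x)$ for all $u,x$, and $f\circ g=\mathrm{id}_{\mathbf{P}}$. A Galois coupling of $(M,N)$ is a tuple $(\mathbf{Q},f\dashv g,h\dashv i,\Gamma)$ with $\mathbf{Q}$ a finite poset, $f:\mathbf{Q}\rightleftarrows\mathbf{P}:g$ and $h:\mathbf{Q}\rightleftarrows\mathbf{P}:i$ Galois insertions, and $\Gamma\in\mathrm{vect}^{\mathbf{Q}}$ with $g^*\Gamma\cong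 M$ and $i^*\Gamma\cong N$. Its cost is $\mathrm{cost}(\Gamma)=\sup_{q\in\mathbf{Q}}d_{\mathbf{P}}(f(q),h(q))$. The Galois transport distance $d_{\mathrm{GT}}(M,N)$ is the infimum of the costs of all Galois couplings of $(M,N)$, and $\infty$ if there is none. *)

theory Defs
  imports Complex_Main "HOL-Library.Extended_Real" "Jordan_Normal_Form.Matrix"
begin

definition finite_poset :: "'a set \<Rightarrow> ('a \<Rightarrow> 'a \<Rightarrow> bool) \<Rightarrow> bool" where
  "finite_poset A leA \<longleftrightarrow> finite A
     \<and> (\<forall>x\<in>A. leA x x)
     \<and> (\<forall>x\<in>A. \<forall>y\<in>A. leA x y \<and> leA y x \<longrightarrow> x = y)
     \<and> (\<forall>x\<in>A. \<forall>y\<in>A. \<forall>z\<in>A. leA x y \<and> leA y z \<longrightarrow> leA x z)"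

definition is_metric :: "('p \<Rightarrow> 'p \<Rightarrow> real) \<Rightarrow> bool" where
  "is_metric d \<longleftrightarrow> (\<forall>x y. d x y = 0 \<longleftrightarrow> x = y)
     \<and> (\<forall>x y. d x y = d y x)
     \<and> (\<forall>x y z. d x z \<le> d x y + d y z)"

text \<open>A module over the poset (A, leA): a functor into finite-dimensional k-vector spaces,
  each space being k^n (given by its dimension), each structure map M x y (for leA x y)
  a (dim y) x (dim x) matrix.\<close>
definition mdim :: "('a \<Rightarrow> 'a \<Rightarrow> 'k mat) \<Rightarrow> 'a \<Rightarrow> nat" where
  "mdim M x = dim_row (M x x)"

definition is_module :: "'a set \<Rightarrow> ('a \<Rightarrow> 'a \<Rightarrow> bool) \<Rightarrow> ('a \<Rightarrow> 'a \<Rightarrow> 'k::field mat) \<Rightarrow> bool" where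
  "is_module A leA M \<longleftrightarrow>
     (\<forall>x\<in>A. M x x = 1\<^sub>m (mdim M x))
     \<and> (\<forall>x\<in>A. \<forall>y\<in>A. leA x y \<longrightarrow> M x y \<in> carrier_mat (mdim M y) (mdim M x))
     \<and> (\<forall>x\<in>A. \<forall>y\<in>A. \<forall>z\<in>A. leA x y \<and> leA y z \<longrightarrow> M y z * M x y = M x z)"

definition mod_iso :: "'a set \<Rightarrow> ('a \<Rightarrow> 'a \<Rightarrow> bool) \<Rightarrow> ('a \<Rightarrow> 'a \<Rightarrow> 'k::field mat) \<Rightarrow> ('a \<Rightarrow> 'a \<Rightarrow> 'k mat) \<Rightarrow> bool" where
  "mod_iso A leA M N \<longleftrightarrow> (\<exists>\<phi>.
     (\<forall>x\<in>A. \<phi> x \<in> carrier_mat (mdim N x) (mdim M x) \<and> invertible_mat (\<phi> x))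
     \<and> (\<forall>x\<in>A. \<forall>y\<in>A. leA x y \<longrightarrow> \<phi> y * M x y = N x y * \<phi> x))"

abbreviation pmodule :: "('p::{finite,order} \<Rightarrow> 'p \<Rightarrow> 'k::field mat) \<Rightarrow> bool" where
  "pmodule M \<equiv> is_module UNIV (\<le>) M"

definition galois_insertion :: "nat set \<Rightarrow> (nat \<Rightarrow> nat \<Rightarrow> bool) \<Rightarrow> (nat \<Rightarrow> 'p::order) \<Rightarrow> ('p \<Rightarrow> nat) \<Rightarrow> bool" where
  "galois_insertion Qs leQ f g \<longleftrightarrow>
     (\<forall>u\<in>Qs. \<forall>v\<in>Qs. leQ u v \<longrightarrow> f u \<le> f v)
     \<and> (\<forall>x. g x \<in> Qs)
     \<and> (\<forall>x y. x \<le> y \<longrightarrow> leQ (g x) (g y))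
     \<and> (\<forall>u\<in>Qs. \<forall>x. f u \<le> x \<longleftrightarrow> leQ u (g x))
     \<and> (\<forall>x. f (g x) = x)"

definition pullback :: "('p \<Rightarrow> 'q) \<Rightarrow> ('q \<Rightarrow> 'q \<Rightarrow> 'k mat) \<Rightarrow> ('p \<Rightarrow> 'p \<Rightarrow> 'k mat)" where
  "pullback g \<Gamma> = (\<lambda>x y. \<Gamma> (g x) (g y))"

text \<open>Galois coupling of (M, N); finite posets Q are represented on finite subsets of nat.\<close>
definition galois_coupling ::
  "('p::{finite,order} \<Rightarrow> 'p \<Rightarrow> 'k::field mat) \<Rightarrow> ('p \<Rightarrow> 'p \<Rightarrow> 'k mat)
   \<Rightarrow> nat set \<Rightarrow> (nat \<Rightarrow> nat \<Rightarrow> bool) \<Rightarrow> (nat \<Rightarrow> 'p) \<Rightarrow> ('p \<Rightarrow> nat)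
   \<Rightarrow> (nat \<Rightarrow> 'p) \<Rightarrow> ('p \<Rightarrow> nat) \<Rightarrow> (nat \<Rightarrow> nat \<Rightarrow> 'k mat) \<Rightarrow> bool" where
  "galois_coupling M N Qs leQ f g h i \<Gamma> \<longleftrightarrow>
     finite_poset Qs leQ
     \<and> galois_insertion Qs leQ f g \<and> galois_insertion Qs leQ h i
     \<and> is_module Qs leQ \<Gamma>
     \<and> mod_iso UNIV (\<le>) (pullback g \<Gamma>) M
     \<and> mod_iso UNIV (\<le>) (pullback i \<Gamma>) N"

definition coupling_cost :: "('p \<Rightarrow> 'p \<Rightarrow> real) \<Rightarrow> nat set \<Rightarrow> (nat \<Rightarrow> 'p) \<Rightarrow> (nat \<Rightarrow> 'p) \<Rightarrow> ereal" where
  "coupling_cost d Qs f h = (SUP q\<in>Qs. ereal (d (f q) (h q)))"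

text \<open>Galois transport distance (Inf of the empty set is \<infinity> in ereal).\<close>
definition d_GT :: "('p::{finite,order} \<Rightarrow> 'p \<Rightarrow> real) \<Rightarrow> ('p \<Rightarrow> 'p \<Rightarrow> 'k::field mat) \<Rightarrow> ('p \<Rightarrow> 'p \<Rightarrow> 'k mat) \<Rightarrow> ereal" where
  "d_GT d M N = Inf {coupling_cost d Qs f h | Qs leQ f g h i (\<Gamma> :: nat \<Rightarrow> nat \<Rightarrow> 'k mat).
                       galois_coupling M N Qs leQ f g h i \<Gamma>}"

end

theory Submission
  imports Defs "HOL-Library.Nat_Bijection"
begin

text \<open>
  Reflexivity comes from the identity coupling of M with itself (P re-indexed by an injection
  into the naturals), symmetry from exchanging the two Galois insertions of a coupling.

  For the triangle inequality, let \<open>(Q1, f1 \<stileturn> g1, h1 \<stileturn> i1, \<Gamma>1)\<close> couple M with N and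
  \<open>(Q2, f2 \<stileturn> g2, h2 \<stileturn> i2, \<Gamma>2)\<close> couple N with K. Conjugating by the given isomorphisms we may
  assume that \<open>\<Gamma>1\<close> pulled back along i1 and \<open>\<Gamma>2\<close> pulled back along g2 are both literally N.
  Glue Q1 and Q2 along these two copies of P: inside the fibre product
  \<open>{(u, v) \<in> Q1 \<times> Q2. h1 u = f2 v}\<close> with the product order take the union of the graphs
  \<open>u \<mapsto> (u, g2 (h1 u))\<close> and \<open>v \<mapsto> (i1 (f2 v), v)\<close>; they meet exactly in the seam
  \<open>x \<mapsto> (i1 x, g2 x)\<close>. The module is \<open>\<Gamma>1\<close> on the first graph and \<open>\<Gamma>2\<close> on the second, and a map
  between the two graphs is routed through the least seam point above its source. The insertions
  \<open>f1 \<stileturn> g1\<close> and \<open>h2 \<stileturn> i2\<close> lift to the glued poset, and since \<open>h1 u = f2 v\<close> on the fibre product,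
  \<open>d (f1 u) (h2 v) \<le> d (f1 u) (h1 u) + d (f2 v) (h2 v)\<close>: costs add.
\<close>

lemma invertible_matI:
  fixes A B :: "'a::semiring_1 mat"
  assumes "A \<in> carrier_mat n n" "B \<in> carrier_mat n n" "A * B = 1\<^sub>m n" "B * A = 1\<^sub>m n"
  shows "invertible_mat A"
  using assms unfolding invertible_mat_def inverts_mat_def by auto

lemma invertible_matE:
  fixes A :: "'a::semiring_1 mat"
  assumes "invertible_mat A" "A \<in> carrier_mat n n"
  obtains B where "B \<in> carrier_mat n n" "A * B = 1\<^sub>m n" "B * A = 1\<^sub>m n"
proof -
  obtain B where AB: "A * B = 1\<^sub>m n" and BA: "B * A = 1\<^sub>m (dim_row B)"
    using assms unfolding invertible_mat_def inverts_mat_def by auto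
  then have "dim_row B = n" "dim_col B = n"
    using assms(2) by (metis carrier_matD index_mult_mat(2,3) index_one_mat(2,3))+
  then show thesis using that AB BA by blast
qed

lemma invertible_mat_mult:
  fixes A B :: "'a::semiring_1 mat"
  assumes "invertible_mat A" "A \<in> carrier_mat n n" "invertible_mat B" "B \<in> carrier_mat n n"
  shows "invertible_mat (A * B)"
proof -
  obtain A' where A': "A' \<in> carrier_mat n n" "A * A' = 1\<^sub>m n" "A' * A = 1\<^sub>m n"
    using invertible_matE assms(1,2) by blast
  obtain B' where B': "B' \<in> carrier_mat n n" "B * B' = 1\<^sub>m n" "B' * B = 1\<^sub>m n"
    using invertible_matE assms(3,4) by blast
  have "B * (B' * A') = A'"
    using assoc_mult_mat[of B n n B' n A' n] assms A' B' by simp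
  then have right: "A * B * (B' * A') = 1\<^sub>m n"
    using assoc_mult_mat[of A n n B n "B' * A'" n] assms A' B' by simp
  have "A' * (A * B) = B"
    using assoc_mult_mat[of A' n n A n B n] assms A' B' by simp
  then have left: "B' * A' * (A * B) = 1\<^sub>m n"
    using assoc_mult_mat[of B' n n A' n "A * B" n] assms A' B' by simp
  from right left show ?thesis
    using assms A' B' by (intro invertible_matI[of _ n "B' * A'"]) auto
qed

lemma mult_mat_assoc:
  fixes A B C :: "'a::semiring_0 mat"
  shows "dim_col A = dim_row B \<Longrightarrow> dim_col B = dim_row C \<Longrightarrow> A * B * C = A * (B * C)"
  by (rule assoc_mult_mat[of A "dim_row A" "dim_col A" B "dim_col B" C "dim_col C"]) auto

section \<open>Modules and their isomorphisms\<close>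

lemma is_module_id: "is_module A R M \<Longrightarrow> x \<in> A \<Longrightarrow> M x x = 1\<^sub>m (mdim M x)"
  unfolding is_module_def by blast

lemma is_module_carrier:
  "is_module A R M \<Longrightarrow> x \<in> A \<Longrightarrow> y \<in> A \<Longrightarrow> R x y \<Longrightarrow> M x y \<in> carrier_mat (mdim M y) (mdim M x)"
  unfolding is_module_def by blast

lemma is_module_comp:
  "is_module A R M \<Longrightarrow> x \<in> A \<Longrightarrow> y \<in> A \<Longrightarrow> z \<in> A \<Longrightarrow> R x y \<Longrightarrow> R y z \<Longrightarrow> M y z * M x y = M x z"
  unfolding is_module_def by blast

lemma mdim_pullback [simp]: "mdim (pullback g \<Gamma>) x = mdim \<Gamma> (g x)"
  unfolding mdim_def pullback_def by simp

lemma is_module_pullback: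
  assumes "is_module Q R \<Gamma>" "\<And>x. x \<in> A \<Longrightarrow> g x \<in> Q"
    and "\<And>x y. x \<in> A \<Longrightarrow> y \<in> A \<Longrightarrow> S x y \<Longrightarrow> R (g x) (g y)"
  shows "is_module A S (pullback g \<Gamma>)"
  using assms unfolding is_module_def mdim_pullback by (simp add: pullback_def)

lemma mod_iso_refl:
  fixes M :: "'a \<Rightarrow> 'a \<Rightarrow> 'k::field mat"
  assumes "is_module A R M"
  shows "mod_iso A R M M"
  unfolding mod_iso_def
proof (intro exI[of _ "\<lambda>x. 1\<^sub>m (mdim M x)"] conjI ballI impI)
  fix x show "invertible_mat (1\<^sub>m (mdim M x) :: 'k mat)"
    by (rule invertible_matI[of _ _ "1\<^sub>m (mdim M x)"]) auto
next
  fix x y assume "x \<in> A" "y \<in> A" "R x y"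
  then have "M x y \<in> carrier_mat (mdim M y) (mdim M x)" by (rule is_module_carrier[OF assms])
  then show "1\<^sub>m (mdim M y) * M x y = M x y * 1\<^sub>m (mdim M x)" by simp
qed auto

lemma mod_iso_mdim:
  assumes "mod_iso A R M N" "x \<in> A"
  shows "mdim N x = mdim M x"
  using assms unfolding mod_iso_def invertible_mat_def by auto

lemma mod_iso_trans:
  fixes M N L :: "'a \<Rightarrow> 'a \<Rightarrow> 'k::field mat"
  assumes M: "is_module A R M" and N: "is_module A R N" and L: "is_module A R L"
    and MN: "mod_iso A R M N" and NL: "mod_iso A R N L"
  shows "mod_iso A R M L"
proof -
  obtain \<phi> where \<phi>: "\<And>x. x \<in> A \<Longrightarrow> \<phi> x \<in> carrier_mat (mdim N x) (mdim M x) \<and> invertible_mat (\<phi> x)"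
    and \<phi>_nat: "\<And>x y. x \<in> A \<Longrightarrow> y \<in> A \<Longrightarrow> R x y \<Longrightarrow> \<phi> y * M x y = N x y * \<phi> x"
    using MN unfolding mod_iso_def by blast
  obtain \<chi> where \<chi>: "\<And>x. x \<in> A \<Longrightarrow> \<chi> x \<in> carrier_mat (mdim L x) (mdim N x) \<and> invertible_mat (\<chi> x)"
    and \<chi>_nat: "\<And>x y. x \<in> A \<Longrightarrow> y \<in> A \<Longrightarrow> R x y \<Longrightarrow> \<chi> y * N x y = L x y * \<chi> x"
    using NL unfolding mod_iso_def by blast
  have dims: "mdim N x = mdim M x" "mdim L x = mdim M x" if "x \<in> A" for x
    using mod_iso_mdim[OF MN that] mod_iso_mdim[OF NL that] by simp_all
  show ?thesis unfolding mod_iso_def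
  proof (intro exI[of _ "\<lambda>x. \<chi> x * \<phi> x"] conjI ballI impI)
    fix x assume x: "x \<in> A"
    have c: "\<phi> x \<in> carrier_mat (mdim M x) (mdim M x)" "\<chi> x \<in> carrier_mat (mdim M x) (mdim M x)"
      using x \<phi> \<chi> dims by auto
    show "\<chi> x * \<phi> x \<in> carrier_mat (mdim L x) (mdim M x)"
      using c dims[OF x] by (metis mult_carrier_mat)
    show "invertible_mat (\<chi> x * \<phi> x)"
      using c x \<phi> \<chi> by (intro invertible_mat_mult) auto
  next
    fix x y assume xy: "x \<in> A" "y \<in> A" "R x y"
    have M_xy: "M x y \<in> carrier_mat (mdim M y) (mdim M x)"
      and N_xy: "N x y \<in> carrier_mat (mdim M y) (mdim M x)"
      and L_xy: "L x y \<in> carrier_mat (mdim M y) (mdim M x)"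
      using xy is_module_carrier[OF M] is_module_carrier[OF N] is_module_carrier[OF L] dims by auto
    have \<phi>_x: "\<phi> x \<in> carrier_mat (mdim M x) (mdim M x)"
      and \<phi>_y: "\<phi> y \<in> carrier_mat (mdim M y) (mdim M y)"
      and \<chi>_x: "\<chi> x \<in> carrier_mat (mdim M x) (mdim M x)"
      and \<chi>_y: "\<chi> y \<in> carrier_mat (mdim M y) (mdim M y)"
      using xy \<phi> \<chi> dims by auto
    have "\<chi> y * \<phi> y * M x y = \<chi> y * (N x y * \<phi> x)"
      using assoc_mult_mat[OF \<chi>_y \<phi>_y M_xy] \<phi>_nat[OF xy] by simp
    also have "\<dots> = L x y * \<chi> x * \<phi> x"
      using assoc_mult_mat[OF \<chi>_y N_xy \<phi>_x] \<chi>_nat[OF xy] by simp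
    also have "\<dots> = L x y * (\<chi> x * \<phi> x)"
      by (rule assoc_mult_mat[OF L_xy \<chi>_x \<phi>_x])
    finally show "\<chi> y * \<phi> y * M x y = L x y * (\<chi> x * \<phi> x)" .
  qed
qed

lemma mod_iso_pullback:
  assumes "mod_iso Q R \<Gamma> \<Gamma>'" "\<And>x. x \<in> A \<Longrightarrow> g x \<in> Q"
    and "\<And>x y. x \<in> A \<Longrightarrow> y \<in> A \<Longrightarrow> S x y \<Longrightarrow> R (g x) (g y)"
  shows "mod_iso A S (pullback g \<Gamma>) (pullback g \<Gamma>')"
proof -
  obtain \<phi> where "\<forall>u\<in>Q. \<phi> u \<in> carrier_mat (mdim \<Gamma>' u) (mdim \<Gamma> u) \<and> invertible_mat (\<phi> u)"
    "\<forall>u\<in>Q. \<forall>v\<in>Q. R u v \<longrightarrow> \<phi> v * \<Gamma> u v = \<Gamma>' u v * \<phi> u"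
    using assms(1) unfolding mod_iso_def by blast
  then show ?thesis unfolding mod_iso_def mdim_pullback using assms(2,3)
    by (intro exI[of _ "\<lambda>x. \<phi> (g x)"]) (simp add: pullback_def)
qed

lemma mod_iso_cong:
  assumes "mod_iso A R M N" "\<And>x. x \<in> A \<Longrightarrow> R x x"
    and "\<And>x y. x \<in> A \<Longrightarrow> y \<in> A \<Longrightarrow> R x y \<Longrightarrow> M' x y = M x y"
  shows "mod_iso A R M' N"
proof -
  have "mdim M' x = mdim M x" if "x \<in> A" for x using assms(2,3) that unfolding mdim_def by auto
  then show ?thesis using assms(1,3) unfolding mod_iso_def by (metis (no_types, lifting))
qed

locale module_conjugation =
  fixes Q :: "'a set" and R :: "'a \<Rightarrow> 'a \<Rightarrow> bool" and \<Gamma> :: "'a \<Rightarrow> 'a \<Rightarrow> 'k::field mat"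
    and \<psi> \<psi>' :: "'a \<Rightarrow> 'k mat"
  assumes module: "is_module Q R \<Gamma>"
    and carrier: "\<And>u. u \<in> Q \<Longrightarrow> \<psi> u \<in> carrier_mat (mdim \<Gamma> u) (mdim \<Gamma> u)"
      "\<And>u. u \<in> Q \<Longrightarrow> \<psi>' u \<in> carrier_mat (mdim \<Gamma> u) (mdim \<Gamma> u)"
    and inverse: "\<And>u. u \<in> Q \<Longrightarrow> \<psi> u * \<psi>' u = 1\<^sub>m (mdim \<Gamma> u)"
      "\<And>u. u \<in> Q \<Longrightarrow> \<psi>' u * \<psi> u = 1\<^sub>m (mdim \<Gamma> u)"
begin

abbreviation conjugate :: "'a \<Rightarrow> 'a \<Rightarrow> 'k mat" where
  "conjugate \<equiv> \<lambda>u v. \<psi> v * \<Gamma> u v * \<psi>' u"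

lemma dims:
  "\<And>u. u \<in> Q \<Longrightarrow> dim_row (\<psi> u) = mdim \<Gamma> u" "\<And>u. u \<in> Q \<Longrightarrow> dim_col (\<psi> u) = mdim \<Gamma> u"
  "\<And>u. u \<in> Q \<Longrightarrow> dim_row (\<psi>' u) = mdim \<Gamma> u" "\<And>u. u \<in> Q \<Longrightarrow> dim_col (\<psi>' u) = mdim \<Gamma> u"
  "\<And>u v. u \<in> Q \<Longrightarrow> v \<in> Q \<Longrightarrow> R u v \<Longrightarrow> dim_row (\<Gamma> u v) = mdim \<Gamma> v"
  "\<And>u v. u \<in> Q \<Longrightarrow> v \<in> Q \<Longrightarrow> R u v \<Longrightarrow> dim_col (\<Gamma> u v) = mdim \<Gamma> u"
  using carrier is_module_carrier[OF module] by (meson carrier_matD)+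

lemma mdim_conjugate: "u \<in> Q \<Longrightarrow> mdim conjugate u = mdim \<Gamma> u"
  using dims by (simp add: mdim_def)

lemma is_module_conjugate: "is_module Q R conjugate"
  unfolding is_module_def
proof (intro conjI ballI impI)
  fix x assume x: "x \<in> Q"
  show "conjugate x x = 1\<^sub>m (mdim conjugate x)"
    using is_module_id[OF module x] dims(1,2)[OF x] inverse(1)[OF x]
    by (simp add: mdim_conjugate[OF x])
next
  fix x y assume xy: "x \<in> Q" "y \<in> Q" "R x y"
  show "conjugate x y \<in> carrier_mat (mdim conjugate y) (mdim conjugate x)"
    using xy dims by (intro carrier_matI) (simp_all add: mdim_conjugate)
next
  fix x y z assume xyz: "x \<in> Q" "y \<in> Q" "z \<in> Q" and le: "R x y \<and> R y z"
  have comp: "\<Gamma> y z * \<Gamma> x y = \<Gamma> x z"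
    using is_module_comp[OF module xyz] le by blast
  have "dim_row (\<Gamma> x z) = mdim \<Gamma> z" "dim_col (\<Gamma> x z) = mdim \<Gamma> x"
    unfolding comp[symmetric] using xyz le dims by simp_all
  note dims = this dims[OF xyz(1)] dims[OF xyz(2)] dims[OF xyz(3)]
    dims(5,6)[OF xyz(1,2)] dims(5,6)[OF xyz(2,3)]
  have "conjugate y z * conjugate x y = \<psi> z * (\<Gamma> y z * ((\<psi>' y * \<psi> y) * (\<Gamma> x y * \<psi>' x)))"
    using le dims by (simp add: mult_mat_assoc)
  also have "\<dots> = \<psi> z * ((\<Gamma> y z * \<Gamma> x y) * \<psi>' x)"
    using le dims inverse(2)[OF xyz(2)] by (simp add: mult_mat_assoc)
  also have "\<dots> = conjugate x z"
    using le dims comp by (simp add: mult_mat_assoc)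
  finally show "conjugate y z * conjugate x y = conjugate x z" .
qed

lemma mod_iso_conjugate: "mod_iso Q R conjugate \<Gamma>"
  unfolding mod_iso_def
proof (intro exI[of _ \<psi>'] conjI ballI impI)
  fix x assume x: "x \<in> Q"
  show "\<psi>' x \<in> carrier_mat (mdim \<Gamma> x) (mdim conjugate x)"
    using carrier(2)[OF x] mdim_conjugate[OF x] by simp
  show "invertible_mat (\<psi>' x)"
    using carrier[OF x] inverse[OF x] by (intro invertible_matI)
next
  fix x y assume xy: "x \<in> Q" "y \<in> Q" "R x y"
  note dims = dims[OF xy(1)] dims[OF xy(2)] dims(5,6)[OF xy]
  have "\<psi>' y * conjugate x y = (\<psi>' y * \<psi> y) * (\<Gamma> x y * \<psi>' x)"
    using dims by (simp add: mult_mat_assoc)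
  then show "\<psi>' y * conjugate x y = \<Gamma> x y * \<psi>' x"
    using dims inverse(2)[OF xy(2)] by simp
qed

end

lemma strictify_pullback:
  fixes \<Gamma> :: "'q \<Rightarrow> 'q \<Rightarrow> 'k::field mat" and N :: "'p::order \<Rightarrow> 'p \<Rightarrow> 'k mat"
  assumes \<Gamma>: "is_module Q R \<Gamma>" and i: "\<And>x. i x \<in> Q" "inj i"
    and N: "is_module UNIV (\<le>) N" and iso: "mod_iso UNIV (\<le>) (pullback i \<Gamma>) N"
  obtains \<Gamma>' where "is_module Q R \<Gamma>'" "mod_iso Q R \<Gamma>' \<Gamma>" "\<And>x y. x \<le> y \<Longrightarrow> \<Gamma>' (i x) (i y) = N x y"
proof -
  obtain \<phi> where \<phi>: "\<And>x. \<phi> x \<in> carrier_mat (mdim N x) (mdim \<Gamma> (i x)) \<and> invertible_mat (\<phi> x)"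
    and \<phi>_nat: "\<And>x y. x \<le> y \<Longrightarrow> \<phi> y * \<Gamma> (i x) (i y) = N x y * \<phi> x"
    using iso unfolding mod_iso_def mdim_pullback by (auto simp: pullback_def)
  have dim_N: "mdim N x = mdim \<Gamma> (i x)" for x
    using mod_iso_mdim[OF iso] by simp
  have "\<forall>x. \<exists>B. B \<in> carrier_mat (mdim \<Gamma> (i x)) (mdim \<Gamma> (i x))
              \<and> \<phi> x * B = 1\<^sub>m (mdim \<Gamma> (i x)) \<and> B * \<phi> x = 1\<^sub>m (mdim \<Gamma> (i x))"
    using \<phi> dim_N invertible_matE by metis
  then obtain \<phi>' where \<phi>': "\<And>x. \<phi>' x \<in> carrier_mat (mdim \<Gamma> (i x)) (mdim \<Gamma> (i x))"
      "\<And>x. \<phi> x * \<phi>' x = 1\<^sub>m (mdim \<Gamma> (i x))" "\<And>x. \<phi>' x * \<phi> x = 1\<^sub>m (mdim \<Gamma> (i x))"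
    by metis
  define \<psi> where "\<psi> u = (if u \<in> range i then \<phi> (the_inv i u) else 1\<^sub>m (mdim \<Gamma> u))" for u
  define \<psi>' where "\<psi>' u = (if u \<in> range i then \<phi>' (the_inv i u) else 1\<^sub>m (mdim \<Gamma> u))" for u
  have \<psi>_i: "\<psi> (i x) = \<phi> x" "\<psi>' (i x) = \<phi>' x" for x
    unfolding \<psi>_def \<psi>'_def using i(2) by (simp_all add: the_inv_f_f)
  have \<psi>: "\<psi> u \<in> carrier_mat (mdim \<Gamma> u) (mdim \<Gamma> u) \<and> \<psi>' u \<in> carrier_mat (mdim \<Gamma> u) (mdim \<Gamma> u)
      \<and> \<psi> u * \<psi>' u = 1\<^sub>m (mdim \<Gamma> u) \<and> \<psi>' u * \<psi> u = 1\<^sub>m (mdim \<Gamma> u)" for u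
  proof (cases "u \<in> range i")
    case True
    then obtain x where "u = i x" by blast
    then show ?thesis using \<phi>[of x] \<phi>' dim_N[of x] by (simp add: \<psi>_i)
  qed (simp add: \<psi>_def \<psi>'_def)
  interpret module_conjugation Q R \<Gamma> \<psi> \<psi>'
    using \<Gamma> \<psi> by unfold_locales blast+
  show thesis
  proof (rule that[OF is_module_conjugate mod_iso_conjugate])
    fix x y :: 'p assume "x \<le> y"
    then have N_xy: "N x y \<in> carrier_mat (mdim \<Gamma> (i y)) (mdim \<Gamma> (i x))"
      using is_module_carrier[OF N] dim_N by fastforce
    have "\<phi> y * \<Gamma> (i x) (i y) * \<phi>' x = N x y * (\<phi> x * \<phi>' x)"
      using \<phi>_nat[OF \<open>x \<le> y\<close>] assoc_mult_mat[OF N_xy _ \<phi>'(1)] \<phi>[of x] dim_N[of x] by simp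
    then show "\<psi> (i y) * \<Gamma> (i x) (i y) * \<psi>' (i x) = N x y"
      using N_xy \<phi>' by (simp add: \<psi>_i)
  qed
qed

section \<open>Galois insertions and couplings\<close>

lemma galois_insertion_right_closed: "galois_insertion Qs R f g \<Longrightarrow> g x \<in> Qs"
  unfolding galois_insertion_def by blast

lemma galois_insertion_left_mono:
  "galois_insertion Qs R f g \<Longrightarrow> u \<in> Qs \<Longrightarrow> v \<in> Qs \<Longrightarrow> R u v \<Longrightarrow> f u \<le> f v"
  unfolding galois_insertion_def by blast

lemma galois_insertion_right_mono: "galois_insertion Qs R f g \<Longrightarrow> x \<le> y \<Longrightarrow> R (g x) (g y)"
  unfolding galois_insertion_def by blast

lemma galois_insertion_adjoint: "galois_insertion Qs R f g \<Longrightarrow> u \<in> Qs \<Longrightarrow> f u \<le> x \<longleftrightarrow> R u (g x)"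
  unfolding galois_insertion_def by blast

lemma galois_insertion_left_right [simp]: "galois_insertion Qs R f g \<Longrightarrow> f (g x) = x"
  unfolding galois_insertion_def by blast

lemma galois_insertion_unit: "galois_insertion Qs R f g \<Longrightarrow> u \<in> Qs \<Longrightarrow> R u (g (f u))"
  unfolding galois_insertion_def by blast

lemma galois_insertion_right_le_iff: "galois_insertion Qs R f g \<Longrightarrow> R (g x) (g y) \<longleftrightarrow> x \<le> y"
  unfolding galois_insertion_def by metis

lemma galois_insertion_right_inj: "galois_insertion Qs R f g \<Longrightarrow> inj g"
  by (metis galois_insertion_left_right injI)

lemma galois_coupling_swap:
  "galois_coupling M N Qs leQ f g h i \<Gamma> \<Longrightarrow> galois_coupling N M Qs leQ h i f g \<Gamma>"
  unfolding galois_coupling_def by blast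

lemma galois_coupling_strictify_right:
  fixes M N :: "'p::{finite,order} \<Rightarrow> 'p \<Rightarrow> 'k::field mat"
  assumes c: "galois_coupling M N Qs leQ f g h i \<Gamma>" and M: "pmodule M" and N: "pmodule N"
  obtains \<Gamma>' where "galois_coupling M N Qs leQ f g h i \<Gamma>'" "\<And>x y. x \<le> y \<Longrightarrow> \<Gamma>' (i x) (i y) = N x y"
proof -
  have poset: "finite_poset Qs leQ"
    and F: "galois_insertion Qs leQ f g" and H: "galois_insertion Qs leQ h i"
    and \<Gamma>: "is_module Qs leQ \<Gamma>" and iso_M: "mod_iso UNIV (\<le>) (pullback g \<Gamma>) M"
    and iso_N: "mod_iso UNIV (\<le>) (pullback i \<Gamma>) N"
    using c unfolding galois_coupling_def by blast+
  obtain \<Gamma>' where \<Gamma>': "is_module Qs leQ \<Gamma>'" and iso: "mod_iso Qs leQ \<Gamma>' \<Gamma>"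
    and strict: "\<And>x y. x \<le> y \<Longrightarrow> \<Gamma>' (i x) (i y) = N x y"
    using strictify_pullback[OF \<Gamma> galois_insertion_right_closed[OF H]
        galois_insertion_right_inj[OF H] N iso_N]
    by blast
  have g: "\<And>x. g x \<in> Qs" "\<And>x y. x \<le> y \<Longrightarrow> leQ (g x) (g y)"
    using galois_insertion_right_closed[OF F] galois_insertion_right_mono[OF F] by blast+
  have "mod_iso UNIV (\<le>) (pullback g \<Gamma>') M"
    using mod_iso_trans[OF is_module_pullback[OF \<Gamma>' g] is_module_pullback[OF \<Gamma> g] M
        mod_iso_pullback[OF iso g] iso_M] by simp
  moreover have "mod_iso UNIV (\<le>) (pullback i \<Gamma>') N"
    by (rule mod_iso_cong[OF mod_iso_refl[OF N]]) (simp_all add: pullback_def strict)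
  ultimately show thesis
    using that[of \<Gamma>'] strict poset F H \<Gamma>' unfolding galois_coupling_def by blast
qed

lemma galois_coupling_strictify_left:
  fixes M N :: "'p::{finite,order} \<Rightarrow> 'p \<Rightarrow> 'k::field mat"
  assumes "galois_coupling M N Qs leQ f g h i \<Gamma>" "pmodule M" "pmodule N"
  obtains \<Gamma>' where "galois_coupling M N Qs leQ f g h i \<Gamma>'" "\<And>x y. x \<le> y \<Longrightarrow> \<Gamma>' (g x) (g y) = M x y"
  using galois_coupling_strictify_right[OF galois_coupling_swap[OF assms(1)] assms(3,2)]
    galois_coupling_swap by metis

section \<open>Subposets of fibre products\<close>

text \<open>Couplings live on sets of naturals, so pairs are stored through \<^const>\<open>prod_encode\<close>.\<close>

definition prod_order :: "(nat \<Rightarrow> nat \<Rightarrow> bool) \<Rightarrow> (nat \<Rightarrow> nat \<Rightarrow> bool) \<Rightarrow> nat \<Rightarrow> nat \<Rightarrow> bool" where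
  "prod_order l1 l2 a b \<longleftrightarrow>
     l1 (fst (prod_decode a)) (fst (prod_decode b)) \<and> l2 (snd (prod_decode a)) (snd (prod_decode b))"

lemma prod_order_encode [simp]:
  "prod_order l1 l2 (prod_encode (u, v)) (prod_encode (u', v')) \<longleftrightarrow> l1 u u' \<and> l2 v v'"
  by (simp add: prod_order_def prod_encode_inverse)

lemma finite_poset_finite: "finite_poset A R \<Longrightarrow> finite A"
  unfolding finite_poset_def by blast

lemma finite_poset_refl: "finite_poset A R \<Longrightarrow> x \<in> A \<Longrightarrow> R x x"
  unfolding finite_poset_def by blast

lemma finite_poset_antisym: "finite_poset A R \<Longrightarrow> x \<in> A \<Longrightarrow> y \<in> A \<Longrightarrow> R x y \<Longrightarrow> R y x \<Longrightarrow> x = y"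
  unfolding finite_poset_def by blast

lemma finite_poset_trans:
  "finite_poset A R \<Longrightarrow> x \<in> A \<Longrightarrow> y \<in> A \<Longrightarrow> z \<in> A \<Longrightarrow> R x y \<Longrightarrow> R y z \<Longrightarrow> R x z"
  unfolding finite_poset_def by blast

lemma finite_poset_prod_order:
  assumes P1: "finite_poset Q1 l1" and P2: "finite_poset Q2 l2"
    and Q: "\<And>a. a \<in> Q \<Longrightarrow> prod_decode a \<in> Q1 \<times> Q2"
  shows "finite_poset Q (prod_order l1 l2)"
  unfolding finite_poset_def
proof (intro conjI ballI impI)
  have "Q \<subseteq> prod_encode ` (Q1 \<times> Q2)"
    using Q by (metis image_eqI prod_decode_inverse subsetI)
  then show "finite Q"
    using finite_poset_finite[OF P1] finite_poset_finite[OF P2]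
    by (meson finite_SigmaI finite_imageI finite_subset)
next
  fix a assume "a \<in> Q"
  then show "prod_order l1 l2 a a"
    using Q[OF \<open>a \<in> Q\<close>] finite_poset_refl[OF P1] finite_poset_refl[OF P2]
    by (simp add: prod_order_def mem_Times_iff)
next
  fix a b assume ab: "a \<in> Q" "b \<in> Q" "prod_order l1 l2 a b \<and> prod_order l1 l2 b a"
  then have "prod_decode a = prod_decode b"
    using Q[OF ab(1)] Q[OF ab(2)] finite_poset_antisym[OF P1] finite_poset_antisym[OF P2]
    by (auto simp: prod_order_def prod_eq_iff mem_Times_iff)
  then show "a = b" by (metis prod_decode_inverse)
next
  fix a b c assume abc: "a \<in> Q" "b \<in> Q" "c \<in> Q" "prod_order l1 l2 a b \<and> prod_order l1 l2 b c"
  then show "prod_order l1 l2 a c"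
    using Q[OF abc(1)] Q[OF abc(2)] Q[OF abc(3)] finite_poset_trans[OF P1] finite_poset_trans[OF P2]
    unfolding prod_order_def mem_Times_iff by blast
qed

lemma galois_insertion_fibre_product:
  fixes g1 :: "'p::order \<Rightarrow> nat"
  assumes F1: "galois_insertion Q1 l1 f1 g1"
    and h1: "\<And>u u'. u \<in> Q1 \<Longrightarrow> u' \<in> Q1 \<Longrightarrow> l1 u u' \<Longrightarrow> h1 u \<le> h1 u'"
    and F2: "galois_insertion Q2 l2 f2 g2"
    and fibre: "\<And>a. a \<in> Q \<Longrightarrow> p a \<in> Q1 \<and> q a \<in> Q2 \<and> h1 (p a) = f2 (q a)"
    and order: "\<And>a b. a \<in> Q \<Longrightarrow> b \<in> Q \<Longrightarrow> leQ a b \<longleftrightarrow> l1 (p a) (p b) \<and> l2 (q a) (q b)"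
    and lift: "\<And>x. e x \<in> Q" "\<And>x. p (e x) = g1 x" "\<And>x. q (e x) = g2 (h1 (g1 x))"
  shows "galois_insertion Q leQ (\<lambda>a. f1 (p a)) e"
  unfolding galois_insertion_def
proof (intro conjI ballI allI impI)
  fix a b assume "a \<in> Q" "b \<in> Q" "leQ a b"
  then show "f1 (p a) \<le> f1 (p b)"
    using galois_insertion_left_mono[OF F1] fibre order by blast
next
  fix x y :: 'p assume "x \<le> y"
  then have "l1 (g1 x) (g1 y)" using galois_insertion_right_mono[OF F1] by blast
  then have "h1 (g1 x) \<le> h1 (g1 y)" using h1 galois_insertion_right_closed[OF F1] by blast
  then show "leQ (e x) (e y)"
    using \<open>l1 (g1 x) (g1 y)\<close> galois_insertion_right_mono[OF F2] order lift by simp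
next
  fix a x assume a: "a \<in> Q"
  show "f1 (p a) \<le> x \<longleftrightarrow> leQ a (e x)"
  proof
    assume "f1 (p a) \<le> x"
    then have "l1 (p a) (g1 x)" using galois_insertion_adjoint[OF F1] fibre[OF a] by blast
    then have "f2 (q a) \<le> h1 (g1 x)"
      using h1 fibre[OF a] galois_insertion_right_closed[OF F1] by metis
    then show "leQ a (e x)"
      using \<open>l1 (p a) (g1 x)\<close> galois_insertion_adjoint[OF F2] fibre[OF a] order[OF a] lift by simp
  next
    assume "leQ a (e x)"
    then show "f1 (p a) \<le> x"
      using galois_insertion_adjoint[OF F1] fibre[OF a] order[OF a] lift by simp
  qed
qed (use lift F1 in simp_all)

lemma metric_nonneg:
  assumes "is_metric d"
  shows "0 \<le> d x y"
proof -
  have "d x x \<le> d x y + d y x" "d x x = 0" "d y x = d x y"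
    using assms unfolding is_metric_def by blast+
  then show ?thesis by linarith
qed

lemma coupling_cost_fibre_product_le:
  assumes d: "is_metric d"
    and fibre: "\<And>a. a \<in> Q \<Longrightarrow> p a \<in> Q1 \<and> q a \<in> Q2 \<and> h1 (p a) = f2 (q a)"
  shows "coupling_cost d Q (\<lambda>a. f1 (p a)) (\<lambda>a. h2 (q a))
           \<le> coupling_cost d Q1 f1 h1 + coupling_cost d Q2 f2 h2"
  unfolding coupling_cost_def
proof (rule SUP_least)
  fix a assume a: "a \<in> Q"
  have "d (f1 (p a)) (h2 (q a)) \<le> d (f1 (p a)) (h1 (p a)) + d (f2 (q a)) (h2 (q a))"
    using d fibre[OF a] unfolding is_metric_def by metis
  then have "ereal (d (f1 (p a)) (h2 (q a)))
               \<le> ereal (d (f1 (p a)) (h1 (p a))) + ereal (d (f2 (q a)) (h2 (q a)))"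
    by simp
  also have "\<dots> \<le> (SUP u\<in>Q1. ereal (d (f1 u) (h1 u))) + (SUP v\<in>Q2. ereal (d (f2 v) (h2 v)))"
    using fibre[OF a] by (intro add_mono SUP_upper) simp_all
  finally show "ereal (d (f1 (p a)) (h2 (q a)))
                  \<le> (SUP u\<in>Q1. ereal (d (f1 u) (h1 u))) + (SUP v\<in>Q2. ereal (d (f2 v) (h2 v)))" .
qed

section \<open>Gluing modules along a common core\<close>

text \<open>
  A comparable pair lying in no common piece is routed through \<open>r a\<close>, the least core point above a.
  For a pair inside some piece, which piece \<open>SOME\<close> picks is irrelevant, since distinct pieces
  only meet in the core, where the modules agree.
\<close>

definition glue_modules ::
  "('i \<Rightarrow> 'a set) \<Rightarrow> ('a \<Rightarrow> 'a) \<Rightarrow> ('i \<Rightarrow> 'a \<Rightarrow> 'a \<Rightarrow> 'k::field mat) \<Rightarrow> 'a \<Rightarrow> 'a \<Rightarrow> 'k mat" where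
  "glue_modules C r \<Gamma> a b =
     (if \<exists>i. a \<in> C i \<and> b \<in> C i then \<Gamma> (SOME i. a \<in> C i \<and> b \<in> C i) a b
      else \<Gamma> (SOME j. b \<in> C j) (r a) b * \<Gamma> (SOME i. a \<in> C i) a (r a))"

locale module_gluing =
  fixes Q :: "'a set" and leQ :: "'a \<Rightarrow> 'a \<Rightarrow> bool"
    and C :: "'i \<Rightarrow> 'a set" and S :: "'a set" and r :: "'a \<Rightarrow> 'a"
    and \<Gamma> :: "'i \<Rightarrow> 'a \<Rightarrow> 'a \<Rightarrow> 'k::field mat"
  assumes poset_refl: "\<And>a. a \<in> Q \<Longrightarrow> leQ a a"
    and poset_trans: "\<And>a b c. a \<in> Q \<Longrightarrow> b \<in> Q \<Longrightarrow> c \<in> Q \<Longrightarrow> leQ a b \<Longrightarrow> leQ b c \<Longrightarrow> leQ a c"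
    and cover: "Q = (\<Union>i. C i)"
    and core: "\<And>i. S \<subseteq> C i"
    and overlap: "\<And>i j. i \<noteq> j \<Longrightarrow> C i \<inter> C j \<subseteq> S"
    and piece_module: "\<And>i. is_module (C i) leQ (\<Gamma> i)"
    and agree: "\<And>i j a b. a \<in> S \<Longrightarrow> b \<in> S \<Longrightarrow> leQ a b \<Longrightarrow> \<Gamma> i a b = \<Gamma> j a b"
    and retract: "\<And>a. a \<in> Q \<Longrightarrow> r a \<in> S" "\<And>a. a \<in> Q \<Longrightarrow> leQ a (r a)"
    and retract_least: "\<And>a c. a \<in> Q \<Longrightarrow> c \<in> S \<Longrightarrow> leQ a c \<Longrightarrow> leQ (r a) c"
    and retract_cross: "\<And>i j a b. i \<noteq> j \<Longrightarrow> a \<in> C i \<Longrightarrow> b \<in> C j \<Longrightarrow> leQ a b \<Longrightarrow> leQ (r a) b"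
begin

abbreviation glued :: "'a \<Rightarrow> 'a \<Rightarrow> 'k mat" where
  "glued \<equiv> glue_modules C r \<Gamma>"

lemma piece_subset: "a \<in> C i \<Longrightarrow> a \<in> Q"
  using cover by blast

lemma retract_piece: "a \<in> Q \<Longrightarrow> r a \<in> C i"
  using retract(1) core by blast

lemma pieceE:
  assumes "a \<in> Q"
  obtains i where "a \<in> C i"
  using assms cover by blast

lemma glued_piece:
  assumes a: "a \<in> C i" and b: "b \<in> C i" and ab: "leQ a b"
  shows "glued a b = \<Gamma> i a b"
proof -
  define k where "k = (SOME k. a \<in> C k \<and> b \<in> C k)"
  have k: "a \<in> C k" "b \<in> C k"
    unfolding k_def using someI[of "\<lambda>k. a \<in> C k \<and> b \<in> C k" i] a b by blast+
  have "glued a b = \<Gamma> k a b"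
    unfolding glue_modules_def k_def using a b by auto
  also have "\<dots> = \<Gamma> i a b"
  proof (cases "k = i")
    case False
    then have "a \<in> S" "b \<in> S" using overlap a b k by blast+
    then show ?thesis using agree ab by blast
  qed simp
  finally show ?thesis .
qed

lemma mdim_glued: "a \<in> C i \<Longrightarrow> mdim glued a = mdim (\<Gamma> i) a"
  unfolding mdim_def using glued_piece poset_refl piece_subset by simp

lemma glued_cross:
  assumes a: "a \<in> Q" and b: "b \<in> Q" and ab: "leQ a b" and disjoint: "\<nexists>k. a \<in> C k \<and> b \<in> C k"
  shows "glued a b = glued (r a) b * glued a (r a)"
proof -
  define i where "i = (SOME i. a \<in> C i)"
  define j where "j = (SOME j. b \<in> C j)"
  have i: "a \<in> C i" unfolding i_def using a by (metis pieceE someI)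
  have j: "b \<in> C j" unfolding j_def using b by (metis pieceE someI)
  have "i \<noteq> j" using i j disjoint by blast
  have "glued a b = \<Gamma> j (r a) b * \<Gamma> i a (r a)"
    unfolding glue_modules_def if_not_P[OF disjoint] i_def j_def ..
  also have "\<dots> = glued (r a) b * glued a (r a)"
    using glued_piece retract_piece[OF a] i j retract(2)[OF a] retract_cross[OF \<open>i \<noteq> j\<close> i j ab] by simp
  finally show ?thesis .
qed

lemma glued_carrier:
  assumes a: "a \<in> Q" and b: "b \<in> Q" and ab: "leQ a b"
  shows "glued a b \<in> carrier_mat (mdim glued b) (mdim glued a)"
proof -
  have joint: "glued a b \<in> carrier_mat (mdim glued b) (mdim glued a)"
    if "a \<in> C i" "b \<in> C i" "leQ a b" for a b i
    using that glued_piece is_module_carrier[OF piece_module] mdim_glued by simp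
  show ?thesis
  proof (cases "\<exists>k. a \<in> C k \<and> b \<in> C k")
    case False
    obtain i j where i: "a \<in> C i" and j: "b \<in> C j" using a b pieceE by metis
    have "i \<noteq> j" using i j False by blast
    have "glued (r a) b \<in> carrier_mat (mdim glued b) (mdim glued (r a))"
      using joint retract_piece[OF a] j retract_cross[OF \<open>i \<noteq> j\<close> i j ab] by blast
    moreover have "glued a (r a) \<in> carrier_mat (mdim glued (r a)) (mdim glued a)"
      using joint retract_piece[OF a] i retract(2)[OF a] by blast
    ultimately show ?thesis
      using glued_cross[OF a b ab False] by (metis mult_carrier_mat)
  qed (use joint ab in blast)
qed

lemma glued_assoc:
  assumes "a \<in> Q" "b \<in> Q" "c \<in> Q" "d \<in> Q" "leQ a b" "leQ b c" "leQ c d"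
  shows "glued c d * glued b c * glued a b = glued c d * (glued b c * glued a b)"
  using assoc_mult_mat[OF glued_carrier[of c d] glued_carrier[of b c] glued_carrier[of a b]] assms
  by blast

lemma glued_comp_piece:
  assumes "a \<in> C i" "b \<in> C i" "c \<in> C i" "leQ a b" "leQ b c"
  shows "glued b c * glued a b = glued a c"
  using assms glued_piece is_module_comp[OF piece_module] poset_trans piece_subset by metis

lemma glued_factor:
  assumes a: "a \<in> Q" and b: "b \<in> Q" and m: "m \<in> S" and am: "leQ a m" and mb: "leQ m b"
  shows "glued m b * glued a m = glued a b"
proof (cases "\<exists>k. a \<in> C k \<and> b \<in> C k")
  case True
  then show ?thesis using glued_comp_piece core m am mb by blast
next
  case False
  obtain i j where i: "a \<in> C i" and j: "b \<in> C j" using a b pieceE by metis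
  have m_piece: "m \<in> C i" "m \<in> C j" using m core by blast+
  have "m \<in> Q" "r a \<in> Q" using m_piece(1) retract_piece[OF a] piece_subset by blast+
  have ra_m: "leQ (r a) m" using retract_least[OF a m am] .
  have "glued m b * glued a m = glued m b * (glued (r a) m * glued a (r a))"
    using glued_comp_piece[OF i retract_piece[OF a] m_piece(1) retract(2)[OF a] ra_m] by simp
  also have "\<dots> = glued m b * glued (r a) m * glued a (r a)"
    using glued_assoc[OF a \<open>r a \<in> Q\<close> \<open>m \<in> Q\<close> b retract(2)[OF a] ra_m mb] by simp
  also have "glued m b * glued (r a) m = glued (r a) b"
    using glued_comp_piece[OF retract_piece[OF a] m_piece(2) j ra_m mb] .
  also have "glued (r a) b * glued a (r a) = glued a b"
    using glued_cross[OF a b poset_trans[OF a \<open>m \<in> Q\<close> b am mb] False] by simp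
  finally show ?thesis .
qed

lemma glued_comp_joint:
  assumes a: "a \<in> C i" and b: "b \<in> C i" and c: "c \<in> Q" and ab: "leQ a b" and bc: "leQ b c"
  shows "glued b c * glued a b = glued a c"
proof (cases "\<exists>k. b \<in> C k \<and> c \<in> C k")
  case True
  then obtain j where j: "b \<in> C j" "c \<in> C j" by blast
  show ?thesis
  proof (cases "i = j")
    case True
    then show ?thesis using glued_comp_piece a j ab bc by blast
  next
    case False
    then have "b \<in> S" using overlap b j by blast
    then show ?thesis using glued_factor piece_subset a c ab bc by blast
  qed
next
  case False
  obtain j where j: "c \<in> C j" using c pieceE by metis
  have "i \<noteq> j" using b j False by blast
  have "b \<in> Q" "a \<in> Q" using a b piece_subset by blast+
  have b_rb: "leQ b (r b)" and rb_c: "leQ (r b) c"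
    using retract(2)[OF \<open>b \<in> Q\<close>] retract_cross[OF \<open>i \<noteq> j\<close> b j bc] by blast+
  have "glued b c * glued a b = glued (r b) c * glued b (r b) * glued a b"
    using glued_cross[OF \<open>b \<in> Q\<close> c bc False] by simp
  also have "\<dots> = glued (r b) c * (glued b (r b) * glued a b)"
    using glued_assoc \<open>a \<in> Q\<close> \<open>b \<in> Q\<close> c retract_piece[OF \<open>b \<in> Q\<close>] piece_subset ab b_rb rb_c by blast
  also have "glued b (r b) * glued a b = glued a (r b)"
    using glued_comp_piece[OF a b retract_piece[OF \<open>b \<in> Q\<close>] ab b_rb] .
  also have "glued (r b) c * glued a (r b) = glued a c"
    using glued_factor[OF \<open>a \<in> Q\<close> c retract(1)[OF \<open>b \<in> Q\<close>] _ rb_c] poset_trans \<open>a \<in> Q\<close> \<open>b \<in> Q\<close>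
      retract_piece[OF \<open>b \<in> Q\<close>] piece_subset ab b_rb by blast
  finally show ?thesis .
qed

lemma glued_comp:
  assumes a: "a \<in> Q" and b: "b \<in> Q" and c: "c \<in> Q" and ab: "leQ a b" and bc: "leQ b c"
  shows "glued b c * glued a b = glued a c"
proof (cases "\<exists>k. a \<in> C k \<and> b \<in> C k")
  case True
  then show ?thesis using glued_comp_joint c ab bc by blast
next
  case False
  obtain i j where i: "a \<in> C i" and j: "b \<in> C j" using a b pieceE by metis
  have "i \<noteq> j" using i j False by blast
  have ra_b: "leQ (r a) b" using retract_cross[OF \<open>i \<noteq> j\<close> i j ab] .
  have "r a \<in> Q" using retract_piece[OF a] piece_subset by blast
  have "glued b c * glued a b = glued b c * (glued (r a) b * glued a (r a))"
    using glued_cross[OF a b ab False] by simp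
  also have "\<dots> = glued b c * glued (r a) b * glued a (r a)"
    using glued_assoc[OF a \<open>r a \<in> Q\<close> b c retract(2)[OF a] ra_b bc] by simp
  also have "glued b c * glued (r a) b = glued (r a) c"
    using glued_comp_joint[OF retract_piece[OF a] j c ra_b bc] .
  also have "glued (r a) c * glued a (r a) = glued a c"
    using glued_factor[OF a c retract(1)[OF a] retract(2)[OF a] poset_trans[OF \<open>r a \<in> Q\<close> b c ra_b bc]] .
  finally show ?thesis .
qed

theorem is_module_glued: "is_module Q leQ glued"
  unfolding is_module_def
proof (intro conjI ballI impI)
  fix a assume "a \<in> Q"
  then obtain i where "a \<in> C i" using pieceE by metis
  then show "glued a a = 1\<^sub>m (mdim glued a)"
    using glued_piece poset_refl is_module_id[OF piece_module] mdim_glued piece_subset by simp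
qed (auto intro: glued_carrier glued_comp)

end

section \<open>Composing couplings\<close>

locale coupling_composition =
  fixes M N K :: "'p::{finite,order} \<Rightarrow> 'p \<Rightarrow> 'k::field mat"
    and Q1 l1 f1 g1 h1 i1 and \<Gamma>1 :: "nat \<Rightarrow> nat \<Rightarrow> 'k mat"
    and Q2 l2 f2 g2 h2 i2 and \<Gamma>2 :: "nat \<Rightarrow> nat \<Rightarrow> 'k mat"
  assumes coupling1: "galois_coupling M N Q1 l1 f1 g1 h1 i1 \<Gamma>1"
    and coupling2: "galois_coupling N K Q2 l2 f2 g2 h2 i2 \<Gamma>2"
    and seam_agree: "\<And>x y. x \<le> y \<Longrightarrow> \<Gamma>1 (i1 x) (i1 y) = \<Gamma>2 (g2 x) (g2 y)"
begin

lemma poset1: "finite_poset Q1 l1" and gi_f1: "galois_insertion Q1 l1 f1 g1"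
  and gi_h1: "galois_insertion Q1 l1 h1 i1" and module1: "is_module Q1 l1 \<Gamma>1"
  and iso1: "mod_iso UNIV (\<le>) (pullback g1 \<Gamma>1) M"
  using coupling1 unfolding galois_coupling_def by blast+

lemma poset2: "finite_poset Q2 l2" and gi_f2: "galois_insertion Q2 l2 f2 g2"
  and gi_h2: "galois_insertion Q2 l2 h2 i2" and module2: "is_module Q2 l2 \<Gamma>2"
  and iso2: "mod_iso UNIV (\<le>) (pullback i2 \<Gamma>2) K"
  using coupling2 unfolding galois_coupling_def by blast+

definition seam :: "'p \<Rightarrow> nat" where
  "seam x = prod_encode (i1 x, g2 x)"

definition side :: "bool \<Rightarrow> nat set" where
  "side b = (if b then (\<lambda>u. prod_encode (u, g2 (h1 u))) ` Q1
                   else (\<lambda>v. prod_encode (i1 (f2 v), v)) ` Q2)"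

definition Q3 :: "nat set" where
  "Q3 = side True \<union> side False"

definition retract :: "nat \<Rightarrow> nat" where
  "retract a = seam (h1 (fst (prod_decode a)))"

definition piece :: "bool \<Rightarrow> nat \<Rightarrow> nat \<Rightarrow> 'k mat" where
  "piece b = (if b then pullback (\<lambda>a. fst (prod_decode a)) \<Gamma>1
                    else pullback (\<lambda>a. snd (prod_decode a)) \<Gamma>2)"

definition g3 :: "'p \<Rightarrow> nat" where
  "g3 x = prod_encode (g1 x, g2 (h1 (g1 x)))"

definition i3 :: "'p \<Rightarrow> nat" where
  "i3 x = prod_encode (i1 (f2 (i2 x)), i2 x)"

lemma side_True: "side True = (\<lambda>u. prod_encode (u, g2 (h1 u))) ` Q1"
  and side_False: "side False = (\<lambda>v. prod_encode (i1 (f2 v), v)) ` Q2"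
  unfolding side_def by simp_all

lemma Q3_fibre:
  assumes "a \<in> Q3"
  shows "fst (prod_decode a) \<in> Q1 \<and> snd (prod_decode a) \<in> Q2
           \<and> h1 (fst (prod_decode a)) = f2 (snd (prod_decode a))"
  using assms galois_insertion_right_closed[OF gi_f2] galois_insertion_right_closed[OF gi_h1]
    gi_f2 gi_h1
  unfolding Q3_def side_def by auto

lemma poset3: "finite_poset Q3 (prod_order l1 l2)"
  using finite_poset_prod_order[OF poset1 poset2] Q3_fibre by (simp add: mem_Times_iff)

lemma seam_side: "seam x \<in> side b"
proof (cases b)
  case True
  have "seam x = prod_encode (i1 x, g2 (h1 (i1 x)))" using gi_h1 by (simp add: seam_def)
  then show ?thesis using True galois_insertion_right_closed[OF gi_h1] by (simp add: side_True)
next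
  case False
  have "seam x = prod_encode (i1 (f2 (g2 x)), g2 x)" using gi_f2 by (simp add: seam_def)
  then show ?thesis using False galois_insertion_right_closed[OF gi_f2] by (simp add: side_False)
qed

lemma side_overlap: "side True \<inter> side False \<subseteq> range seam"
proof
  fix a assume a: "a \<in> side True \<inter> side False"
  then obtain u where u: "a = prod_encode (u, g2 (h1 u))" unfolding side_True by blast
  obtain v where v: "a = prod_encode (i1 (f2 v), v)" using a unfolding side_False by blast
  have "(u, g2 (h1 u)) = (i1 (f2 v), v)" using u v prod_encode_eq by metis
  then have "i1 (f2 (g2 (h1 u))) = u" by (metis prod.inject)
  then have "i1 (h1 u) = u" using gi_f2 by simp
  then have "a = seam (h1 u)" using u by (simp add: seam_def)
  then show "a \<in> range seam" by blast
qed

lemma piece_seam: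
  assumes "x \<le> y"
  shows "piece b (seam x) (seam y) = \<Gamma>1 (i1 x) (i1 y)"
  using seam_agree[OF assms] by (simp add: piece_def pullback_def seam_def)

lemma le_retract:
  assumes "a \<in> Q3"
  shows "prod_order l1 l2 a (retract a)"
proof -
  obtain u v where a: "a = prod_encode (u, v)" by (metis prod_decode_inverse surj_pair)
  then have "u \<in> Q1" "v \<in> Q2" "h1 u = f2 v" using Q3_fibre[OF assms] by simp_all
  then show ?thesis
    using galois_insertion_unit[OF gi_h1 \<open>u \<in> Q1\<close>] galois_insertion_unit[OF gi_f2 \<open>v \<in> Q2\<close>]
    by (simp add: a retract_def seam_def)
qed

lemma retract_least:
  assumes "a \<in> Q3" "prod_order l1 l2 a (seam x)"
  shows "prod_order l1 l2 (retract a) (seam x)"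
proof -
  obtain u v where a: "a = prod_encode (u, v)" by (metis prod_decode_inverse surj_pair)
  then have "u \<in> Q1" using Q3_fibre[OF assms(1)] by simp
  moreover have "l1 u (i1 x)" using assms(2) by (simp add: a seam_def)
  ultimately have "h1 u \<le> x" using galois_insertion_adjoint[OF gi_h1] by blast
  then show ?thesis
    using galois_insertion_right_mono[OF gi_h1] galois_insertion_right_mono[OF gi_f2]
    by (simp add: a retract_def seam_def)
qed

lemma retract_cross:
  assumes "b \<noteq> b'" "a \<in> side b" "c \<in> side b'" "prod_order l1 l2 a c"
  shows "prod_order l1 l2 (retract a) c"
proof (cases b)
  case True
  then have "a \<in> side True" "c \<in> side False" using assms(1-3) by auto
  then obtain u v where uv: "u \<in> Q1" "v \<in> Q2"
    "a = prod_encode (u, g2 (h1 u))" "c = prod_encode (i1 (f2 v), v)"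
    unfolding side_True side_False by blast
  then have "l2 (g2 (h1 u)) v" using assms(4) by simp
  then have "h1 u \<le> f2 v"
    using galois_insertion_left_mono[OF gi_f2 galois_insertion_right_closed[OF gi_f2] \<open>v \<in> Q2\<close>] gi_f2
    by simp
  then show ?thesis
    using \<open>l2 (g2 (h1 u)) v\<close> galois_insertion_right_mono[OF gi_h1]
    by (simp add: uv retract_def seam_def)
next
  case False
  then have "a \<in> side False" "c \<in> side True" using assms(1-3) by auto
  then obtain u v where uv: "u \<in> Q1" "v \<in> Q2"
    "a = prod_encode (i1 (f2 v), v)" "c = prod_encode (u, g2 (h1 u))"
    unfolding side_True side_False by blast
  then have "l1 (i1 (f2 v)) u" using assms(4) by simp
  then have "f2 v \<le> h1 u"
    using galois_insertion_left_mono[OF gi_h1 galois_insertion_right_closed[OF gi_h1] \<open>u \<in> Q1\<close>] gi_h1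
    by simp
  then show ?thesis
    using \<open>l1 (i1 (f2 v)) u\<close> galois_insertion_right_mono[OF gi_f2] gi_h1
    by (simp add: uv retract_def seam_def)
qed

sublocale gluing: module_gluing Q3 "prod_order l1 l2" side "range seam" retract piece
proof
  show "Q3 = (\<Union>b. side b)" unfolding Q3_def UNIV_bool by auto
  show "range seam \<subseteq> side b" for b using seam_side by blast
  show "side b \<inter> side b' \<subseteq> range seam" if "b \<noteq> b'" for b b'
    using that side_overlap by (cases b) auto
  show "is_module (side b) (prod_order l1 l2) (piece b)" for b
  proof (cases b)
    case True
    then show ?thesis
      unfolding piece_def using module1 Q3_fibre
      by (auto simp: Q3_def prod_order_def intro!: is_module_pullback)
  next
    case False
    then show ?thesis
      unfolding piece_def using module2 Q3_fibre
      by (auto simp: Q3_def prod_order_def intro!: is_module_pullback)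
  qed
  show "piece b a c = piece b' a c"
    if ac: "a \<in> range seam" "c \<in> range seam" "prod_order l1 l2 a c" for b b' a c
  proof -
    obtain x y where "a = seam x" "c = seam y" using ac by blast
    moreover have "x \<le> y"
      using ac galois_insertion_right_le_iff[OF gi_h1] by (simp add: calculation seam_def)
    ultimately show ?thesis using piece_seam by simp
  qed
  show "prod_order l1 l2 a a" if "a \<in> Q3" for a
    using finite_poset_refl[OF poset3 that] .
  show "prod_order l1 l2 a c"
    if "a \<in> Q3" "b \<in> Q3" "c \<in> Q3" "prod_order l1 l2 a b" "prod_order l1 l2 b c" for a b c
    using finite_poset_trans[OF poset3 that] .
  show "retract a \<in> range seam" for a
    by (simp add: retract_def)
  show "prod_order l1 l2 (retract a) c" if "a \<in> Q3" "c \<in> range seam" "prod_order l1 l2 a c" for a c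
    using retract_least that by blast
qed (use le_retract retract_cross in blast)+

lemma g3_side: "g3 x \<in> side True"
  unfolding g3_def side_True using galois_insertion_right_closed[OF gi_f1] by blast

lemma i3_side: "i3 x \<in> side False"
  unfolding i3_def side_False using galois_insertion_right_closed[OF gi_h2] by blast

lemma galois_insertion_g3:
  "galois_insertion Q3 (prod_order l1 l2) (\<lambda>a. f1 (fst (prod_decode a))) g3"
proof (rule galois_insertion_fibre_product[OF gi_f1 _ gi_f2, where q = "\<lambda>a. snd (prod_decode a)"])
  show "h1 u \<le> h1 u'" if "u \<in> Q1" "u' \<in> Q1" "l1 u u'" for u u'
    using galois_insertion_left_mono[OF gi_h1 that] .
  show "g3 x \<in> Q3" for x
    using g3_side unfolding Q3_def by blast
qed (use Q3_fibre in \<open>simp_all add: prod_order_def g3_def\<close>)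

lemma galois_insertion_i3:
  "galois_insertion Q3 (prod_order l1 l2) (\<lambda>a. h2 (snd (prod_decode a))) i3"
proof (rule galois_insertion_fibre_product[OF gi_h2 _ gi_h1, where q = "\<lambda>a. fst (prod_decode a)"])
  show "f2 v \<le> f2 v'" if "v \<in> Q2" "v' \<in> Q2" "l2 v v'" for v v'
    using galois_insertion_left_mono[OF gi_f2 that] .
  show "i3 x \<in> Q3" for x
    using i3_side unfolding Q3_def by blast
qed (use Q3_fibre in \<open>auto simp: prod_order_def i3_def\<close>)

theorem composite_coupling:
  "galois_coupling M K Q3 (prod_order l1 l2) (\<lambda>a. f1 (fst (prod_decode a))) g3
     (\<lambda>a. h2 (snd (prod_decode a))) i3 gluing.glued"
proof -
  have "mod_iso UNIV (\<le>) (pullback g3 gluing.glued) M"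
  proof (rule mod_iso_cong[OF iso1])
    fix x y :: 'p assume "x \<le> y"
    then have "gluing.glued (g3 x) (g3 y) = piece True (g3 x) (g3 y)"
      using gluing.glued_piece g3_side galois_insertion_right_mono[OF galois_insertion_g3] by blast
    then show "pullback g3 gluing.glued x y = pullback g1 \<Gamma>1 x y"
      by (simp add: pullback_def piece_def g3_def)
  qed simp
  moreover have "mod_iso UNIV (\<le>) (pullback i3 gluing.glued) K"
  proof (rule mod_iso_cong[OF iso2])
    fix x y :: 'p assume "x \<le> y"
    then have "gluing.glued (i3 x) (i3 y) = piece False (i3 x) (i3 y)"
      using gluing.glued_piece i3_side galois_insertion_right_mono[OF galois_insertion_i3] by blast
    then show "pullback i3 gluing.glued x y = pullback i2 \<Gamma>2 x y"
      by (simp add: pullback_def piece_def i3_def)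
  qed simp
  ultimately show ?thesis
    unfolding galois_coupling_def
    using poset3 galois_insertion_g3 galois_insertion_i3 gluing.is_module_glued by blast
qed

lemma composite_cost:
  assumes "is_metric d"
  shows "coupling_cost d Q3 (\<lambda>a. f1 (fst (prod_decode a))) (\<lambda>a. h2 (snd (prod_decode a)))
           \<le> coupling_cost d Q1 f1 h1 + coupling_cost d Q2 f2 h2"
  using Q3_fibre
  by (rule coupling_cost_fibre_product_le[OF assms,
        where p = "\<lambda>a. fst (prod_decode a)" and q = "\<lambda>a. snd (prod_decode a)"])

end

lemma galois_coupling_compose:
  fixes M N K :: "'p::{finite,order} \<Rightarrow> 'p \<Rightarrow> 'k::field mat"
  assumes d: "is_metric d" and M: "pmodule M" and N: "pmodule N" and K: "pmodule K"
    and c1: "galois_coupling M N Q1 l1 f1 g1 h1 i1 \<Gamma>1"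
    and c2: "galois_coupling N K Q2 l2 f2 g2 h2 i2 \<Gamma>2"
  obtains Qs leQ f g h i and \<Gamma> :: "nat \<Rightarrow> nat \<Rightarrow> 'k mat"
  where "galois_coupling M K Qs leQ f g h i \<Gamma>"
    and "coupling_cost d Qs f h \<le> coupling_cost d Q1 f1 h1 + coupling_cost d Q2 f2 h2"
proof -
  obtain \<Gamma>1' where c1': "galois_coupling M N Q1 l1 f1 g1 h1 i1 \<Gamma>1'"
    and strict1: "\<And>x y. x \<le> y \<Longrightarrow> \<Gamma>1' (i1 x) (i1 y) = N x y"
    using galois_coupling_strictify_right[OF c1 M N] by blast
  obtain \<Gamma>2' where c2': "galois_coupling N K Q2 l2 f2 g2 h2 i2 \<Gamma>2'"
    and strict2: "\<And>x y. x \<le> y \<Longrightarrow> \<Gamma>2' (g2 x) (g2 y) = N x y"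
    using galois_coupling_strictify_left[OF c2 N K] by blast
  interpret coupling_composition M N K Q1 l1 f1 g1 h1 i1 \<Gamma>1' Q2 l2 f2 g2 h2 i2 \<Gamma>2'
    using c1' c2' strict1 strict2 by unfold_locales simp_all
  show thesis
    using that composite_coupling composite_cost[OF d] by blast
qed

section \<open>The Galois transport distance\<close>

lemma d_GT_le_coupling_cost:
  fixes M N :: "'p::{finite,order} \<Rightarrow> 'p \<Rightarrow> 'k::field mat"
  assumes "galois_coupling M N Qs leQ f g h i (\<Gamma> :: nat \<Rightarrow> nat \<Rightarrow> 'k mat)"
  shows "d_GT d M N \<le> coupling_cost d Qs f h"
  unfolding d_GT_def by (rule Inf_lower) (use assms in blast)

lemma d_GT_greatest:
  fixes M N :: "'p::{finite,order} \<Rightarrow> 'p \<Rightarrow> 'k::field mat"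
  assumes "\<And>Qs leQ f g h i (\<Gamma> :: nat \<Rightarrow> nat \<Rightarrow> 'k mat).
             galois_coupling M N Qs leQ f g h i \<Gamma> \<Longrightarrow> z \<le> coupling_cost d Qs f h"
  shows "z \<le> d_GT d M N"
  unfolding d_GT_def by (rule Inf_greatest) (use assms in blast)

lemma coupling_cost_nonneg:
  assumes "is_metric d" "galois_insertion Qs leQ f g"
  shows "0 \<le> coupling_cost d Qs f h"
proof -
  have "ereal 0 \<le> ereal (d (f (g x)) (h (g x)))" for x
    using metric_nonneg[OF assms(1)] by simp
  also have "\<dots> x \<le> coupling_cost d Qs f h" for x
    unfolding coupling_cost_def using galois_insertion_right_closed[OF assms(2)] by (rule SUP_upper)
  finally show ?thesis by (simp add: zero_ereal_def)
qed

lemma coupling_cost_commute: "is_metric d \<Longrightarrow> coupling_cost d Qs h f = coupling_cost d Qs f h"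
  unfolding coupling_cost_def is_metric_def by metis

lemma d_GT_commute:
  fixes M N :: "'p::{finite,order} \<Rightarrow> 'p \<Rightarrow> 'k::field mat"
  assumes "is_metric d"
  shows "d_GT d M N = d_GT d N M"
proof -
  have "d_GT d M N \<le> d_GT d N M" for M N :: "'p \<Rightarrow> 'p \<Rightarrow> 'k mat"
  proof (rule d_GT_greatest)
    fix Qs leQ f g h i and \<Gamma> :: "nat \<Rightarrow> nat \<Rightarrow> 'k mat"
    assume "galois_coupling N M Qs leQ f g h i \<Gamma>"
    then have "d_GT d M N \<le> coupling_cost d Qs h f"
      by (rule d_GT_le_coupling_cost[OF galois_coupling_swap])
    then show "d_GT d M N \<le> coupling_cost d Qs f h"
      using coupling_cost_commute[OF assms] by simp
  qed
  then show ?thesis using order.antisym by blast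
qed

lemma identity_galois_coupling:
  fixes M :: "'p::{finite,order} \<Rightarrow> 'p \<Rightarrow> 'k::field mat" and e :: "'p \<Rightarrow> nat"
  assumes e: "inj e" and M: "pmodule M"
  shows "galois_coupling M M (range e) (\<lambda>u v. the_inv e u \<le> the_inv e v)
           (the_inv e) e (the_inv e) e (pullback (the_inv e) M)"
proof -
  have inv_e [simp]: "the_inv e (e x) = x" for x
    using e by (rule the_inv_f_f)
  have "finite_poset (range e) (\<lambda>u v. the_inv e u \<le> the_inv e v)"
    unfolding finite_poset_def by auto
  moreover have "galois_insertion (range e) (\<lambda>u v. the_inv e u \<le> the_inv e v) (the_inv e) e"
    unfolding galois_insertion_def by auto
  moreover have "is_module (range e) (\<lambda>u v. the_inv e u \<le> the_inv e v) (pullback (the_inv e) M)"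
    using M by (rule is_module_pullback) simp_all
  moreover have "pullback e (pullback (the_inv e) M) = M"
    by (simp add: pullback_def)
  ultimately show ?thesis
    unfolding galois_coupling_def using mod_iso_refl[OF M] by simp
qed

lemma d_GT_self:
  fixes M :: "'p::{finite,order} \<Rightarrow> 'p \<Rightarrow> 'k::field mat"
  assumes d: "is_metric d" and M: "pmodule M"
  shows "d_GT d M M = 0"
proof -
  obtain e :: "'p \<Rightarrow> nat" where e: "inj e"
    using finite_imp_inj_to_nat_seg[of "UNIV :: 'p set"] by auto
  have "d x x = 0" for x
    using d unfolding is_metric_def by blast
  then have "coupling_cost d (range e) (the_inv e) (the_inv e) = 0"
    unfolding coupling_cost_def by simp
  then have "d_GT d M M \<le> 0"
    using d_GT_le_coupling_cost[OF identity_galois_coupling[OF e M]] by metis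
  moreover have "0 \<le> d_GT d M M"
    by (rule d_GT_greatest) (use coupling_cost_nonneg[OF d] in \<open>auto simp: galois_coupling_def\<close>)
  ultimately show ?thesis by simp
qed

lemma ereal_le_Inf_add_Inf:
  fixes A B :: "ereal set"
  assumes A: "\<And>a. a \<in> A \<Longrightarrow> 0 \<le> a" and B: "\<And>b. b \<in> B \<Longrightarrow> 0 \<le> b"
    and le: "\<And>a b. a \<in> A \<Longrightarrow> b \<in> B \<Longrightarrow> z \<le> a + b"
  shows "z \<le> Inf A + Inf B"
proof -
  have "0 \<le> Inf A" "0 \<le> Inf B" using A B by (auto intro: Inf_greatest)
  show ?thesis
  proof (cases "A = {} \<or> B = {}")
    case True
    then show ?thesis using \<open>0 \<le> Inf A\<close> \<open>0 \<le> Inf B\<close> by (auto simp: top_ereal_def)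
  next
    case False
    have "Inf A + Inf B = (INF a\<in>A. a + Inf B)"
      using INF_ereal_add_left[of A "Inf B" "\<lambda>a. a"] False A \<open>0 \<le> Inf B\<close> by simp
    also have "\<dots> = (INF a\<in>A. INF b\<in>B. a + b)"
      using INF_ereal_add_right[of B _ "\<lambda>b. b"] False A B by (intro INF_cong) auto
    finally show ?thesis using le by (auto intro!: INF_greatest)
  qed
qed

lemma d_GT_triangle:
  fixes M N K :: "'p::{finite,order} \<Rightarrow> 'p \<Rightarrow> 'k::field mat"
  assumes d: "is_metric d" and M: "pmodule M" and N: "pmodule N" and K: "pmodule K"
  shows "d_GT d M K \<le> d_GT d M N + d_GT d N K"
  unfolding d_GT_def[of d M N] d_GT_def[of d N K]
proof (rule ereal_le_Inf_add_Inf; clarify)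
  fix Q1 l1 f1 g1 h1 i1 Q2 l2 f2 g2 h2 i2 and \<Gamma>1 \<Gamma>2 :: "nat \<Rightarrow> nat \<Rightarrow> 'k mat"
  assume "galois_coupling M N Q1 l1 f1 g1 h1 i1 \<Gamma>1" "galois_coupling N K Q2 l2 f2 g2 h2 i2 \<Gamma>2"
  then obtain Qs leQ f g h i and \<Gamma> :: "nat \<Rightarrow> nat \<Rightarrow> 'k mat"
    where c: "galois_coupling M K Qs leQ f g h i \<Gamma>"
      and cost: "coupling_cost d Qs f h \<le> coupling_cost d Q1 f1 h1 + coupling_cost d Q2 f2 h2"
    by (rule galois_coupling_compose[OF d M N K])
  show "d_GT d M K \<le> coupling_cost d Q1 f1 h1 + coupling_cost d Q2 f2 h2"
    using d_GT_le_coupling_cost[OF c] cost by (rule order.trans)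
qed (use coupling_cost_nonneg[OF d] in \<open>auto simp: galois_coupling_def\<close>)

theorem proposition3p6:
  fixes d :: "'p::{finite,order} \<Rightarrow> 'p \<Rightarrow> real"
    and M N K :: "'p \<Rightarrow> 'p \<Rightarrow> 'k::field mat"
  assumes "is_metric d"
    and "pmodule M" and "pmodule N" and "pmodule K"
  shows "d_GT d M M = 0 \<and> d_GT d M N = d_GT d N M
         \<and> d_GT d M K \<le> d_GT d M N + d_GT d N K"
  using d_GT_self[OF assms(1,2)] d_GT_commute[OF assms(1)] d_GT_triangle[OF assms] by blast

end
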